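(* Let $\beta>0$, $\gamma>0$, $\alpha_I\in(0,1]$, $d\ge0$, and let $q$ be a probability measure on $(0,\infty)$ (absolutely continuous part plus finitely many atoms, finite mean $T_q$). Fix $r^\star>0$, let $\mathcal C_1=(0,r^\star]$, $\mathcal C_2=(r^\star,\infty)$, $p^i=q(\mathcal C_i)>0$, $q^i(I)=q(I\cap\mathcal C_i)/p^i$ with mean $T_{q^i}$. For $d>0$ set $$\mu^{\rm in}=\frac{d}{1-\hat q(d)},\quad \mu^{{\rm in},i}=\frac{d}{1-\hat q^i(d)},\quad \pi^i=p^i\frac{1-\hat q^i(d)}{1-\hat q(d)}\quad(i=1,2),$$ with $\hat\nu(d)=\int e^{-dr}\nu(dr)$, and for $d=0$ set $\mu^{\rm in}=1/T_q$, $\mu^{{\rm in},i}=1/T_{q^i}$, $\pi^i=p^iT_{q^i}/T_q$. Assume $\mu^{{\rm in},i}>0$, $i=1,2$. Let $x^\star$ be the nonnegative equilibrium of the single-class SIS equation $$\dot x=\alpha_I\mu^{\rm in}+\beta x(1-x)-(\gamma+\mu^{\rm in})x,$$ i.e. $x^\star=\frac1{2\beta}\Big[(\beta-\gamma-\mu^{\rm in})+\sqrt{(\beta-\gamma-\mu^{\rm in})^2+4\alpha_I\mu^{\rm in}\beta}\Big]$, and let $(x_1^\star,x_2^\star)$ with $x_1^\star,x_2^\star\ge0$ be an equilibrium of the two-class SIS system $$\dot x^i=\alpha_I\pi^i\mu^{{\rm in},i}+\beta(x^1+x^2)(\pi^i-x^i)-(\gamma+\mu^{{\rm in},i})x^i,\qquad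 i=1,2,$$ and $\omega^\star=x_1^\star+x_2^\star$. Then $x^\star>0$ and $\omega^\star>0$. Moreover, $x^\star<\omega^\star$ (respectively $x^\star>\omega^\star$, $x^\star=\omega^\star$) if and only if $\alpha_I<1-\frac{\gamma}{\beta}$ (respectively $\alpha_I>1-\frac\gamma\beta$, $\alpha_I=1-\frac\gamma\beta$).
   Context: Interpretation: $x$ is the proportion of infective inmates in the prison at population equilibrium when sentence-length structure is ignored; $x^i$ is the proportion (relative to the total prison population) of infective inmates with initial sentence length in class $\mathcal C_i$ (short/long sentences); $\alpha_I$ is the infective proportion among new inmates, $\beta$ the contact rate, $\gamma$ the recovery rate, $d$ the removal rate common to both classes. The case $d=0$ is defined by the stated limiting values. *)

theory Defs
  imports "HOL-Probability.Probability"
begin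

definition laplace :: "real measure \<Rightarrow> real \<Rightarrow> real" where
  "laplace \<nu> d = (\<integral>r. exp (- d * r) \<partial>\<nu>)"

definition mean :: "real measure \<Rightarrow> real" where
  "mean \<nu> = (\<integral>r. r \<partial>\<nu>)"

definition cond_measure :: "real measure \<Rightarrow> real set \<Rightarrow> real measure" where
  "cond_measure q C = density q (\<lambda>r. ennreal (indicator C r / measure q C))"

definition mu_in :: "real measure \<Rightarrow> real \<Rightarrow> real" where
  "mu_in \<nu> d = (if d > 0 then d / (1 - laplace \<nu> d) else 1 / mean \<nu>)"

definition pi_class :: "real measure \<Rightarrow> real set \<Rightarrow> real \<Rightarrow> real" where
  "pi_class q C d = (let p = measure q C; qi = cond_measure q C in
     if d > 0 then p * (1 - laplace qi d) / (1 - laplace q d)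
     else p * mean qi / mean q)"

definition x_star :: "real \<Rightarrow> real \<Rightarrow> real \<Rightarrow> real \<Rightarrow> real" where
  "x_star \<alpha>I \<beta> \<gamma> \<mu> = (1 / (2 * \<beta>)) *
     ((\<beta> - \<gamma> - \<mu>) + sqrt ((\<beta> - \<gamma> - \<mu>)^2 + 4 * \<alpha>I * \<mu> * \<beta>))"

end

theory Submission
  imports Defs
begin

(* With w = x1 + x2 and D_i = \<beta> w + \<gamma> + \<mu>_i, the i-th equilibrium equation solves to
   x_i = \<pi>_i (\<alpha> - \<phi> / D_i) with \<phi> = \<alpha> \<gamma> - \<beta> (1 - \<alpha>) w; summing gives \<alpha> - w = \<phi> S,
   S = \<pi>_1 / D_1 + \<pi>_2 / D_2.  Since \<gamma> S < 1, \<phi> has the sign of \<gamma> - \<beta> (1 - \<alpha>).  The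
   single-class quadratic P, whose positive root is x*, satisfies P(w) = \<phi> (1 - S D) with
   D = \<pi>_1 D_1 + \<pi>_2 D_2, and S D > 1 by the strict harmonic-arithmetic mean inequality, as
   \<mu>_1 \<noteq> \<mu>_2.  So w - x* has the sign of \<beta> (1 - \<alpha>) - \<gamma>.

   The sentence-length distribution enters only through 1 / \<mu> = p_1 / \<mu>_1 + p_2 / \<mu>_2 and
   \<pi>_i = p_i \<mu> / \<mu>_i, and \<mu>_1 > \<mu>_2 holds because the short-sentence class has the larger
   Laplace transform (d > 0), resp. the smaller mean (d = 0). *)

lemma sgn_eq_if_mult_pos_eq:
  fixes u v k l :: real
  assumes "u * k = v * l" "0 < k" "0 < l"
  shows "sgn u = sgn v"
proof -
  have "sgn u = sgn (u * k)" using \<open>0 < k\<close> by (simp add: sgn_mult sgn_pos)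
  also have "\<dots> = sgn (v * l)" using assms by simp
  also have "\<dots> = sgn v" using \<open>0 < l\<close> by (simp add: sgn_mult sgn_pos)
  finally show ?thesis .
qed

lemma weighted_inverse_mean_less:
  fixes \<pi>1 \<pi>2 D1 D2 c :: real
  assumes "0 < \<pi>1" "0 < \<pi>2" "\<pi>1 + \<pi>2 = 1" "0 < c" "c < D1" "c < D2"
  shows "\<pi>1 / D1 + \<pi>2 / D2 < 1 / c"
proof -
  have "\<pi>1 / D1 < \<pi>1 / c" "\<pi>2 / D2 < \<pi>2 / c"
    using assms by (simp_all add: divide_strict_left_mono)
  moreover have "\<pi>1 / c + \<pi>2 / c = 1 / c"
    using assms(3) by (simp flip: add_divide_distrib)
  ultimately show ?thesis by linarith
qed

lemma weighted_mean_times_weighted_inverse_mean_gt_1: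
  fixes \<pi>1 \<pi>2 D1 D2 :: real
  assumes "0 < \<pi>1" "0 < \<pi>2" "\<pi>1 + \<pi>2 = 1" "0 < D1" "0 < D2" "D1 \<noteq> D2"
  shows "1 < (\<pi>1 / D1 + \<pi>2 / D2) * (\<pi>1 * D1 + \<pi>2 * D2)"
proof -
  have \<pi>2: "\<pi>2 = 1 - \<pi>1" using assms by simp
  have "(\<pi>1 / D1 + \<pi>2 / D2) * (\<pi>1 * D1 + \<pi>2 * D2) - 1 = \<pi>1 * \<pi>2 * (D1 - D2)^2 / (D1 * D2)"
    unfolding \<pi>2 using assms by (simp add: field_simps power2_eq_square)
  moreover have "0 < \<pi>1 * \<pi>2 * (D1 - D2)^2 / (D1 * D2)"
    using assms by simp
  ultimately show ?thesis by linarith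
qed

lemma harmonic_mixture_weights:
  fixes p1 p2 \<mu> \<mu>1 \<mu>2 :: real
  assumes p: "0 < p1" "0 < p2" "p1 + p2 = 1" and \<mu>i: "0 < \<mu>1" "0 < \<mu>2"
    and harmonic: "1 / \<mu> = p1 / \<mu>1 + p2 / \<mu>2"
  shows "0 < \<mu>" and "p1 * \<mu> / \<mu>1 + p2 * \<mu> / \<mu>2 = 1"
    and "\<mu> = p1 * \<mu> / \<mu>1 * \<mu>1 + p2 * \<mu> / \<mu>2 * \<mu>2"
proof -
  have "0 < 1 / \<mu>" unfolding harmonic using p \<mu>i by (simp add: add_pos_pos)
  then show \<mu>: "0 < \<mu>" by simp
  have "p1 * \<mu> / \<mu>1 + p2 * \<mu> / \<mu>2 = \<mu> * (1 / \<mu>)"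
    unfolding harmonic by (simp add: algebra_simps)
  then show "p1 * \<mu> / \<mu>1 + p2 * \<mu> / \<mu>2 = 1" using \<mu> by simp
  have "p1 * \<mu> / \<mu>1 * \<mu>1 + p2 * \<mu> / \<mu>2 * \<mu>2 = \<mu> * (p1 + p2)"
    using \<mu>i by (simp add: algebra_simps)
  then show "\<mu> = p1 * \<mu> / \<mu>1 * \<mu>1 + p2 * \<mu> / \<mu>2 * \<mu>2"
    using p(3) by simp
qed

lemma x_star_pos:
  assumes "0 < \<beta>" "0 < \<alpha> * \<mu>"
  shows "0 < x_star \<alpha> \<beta> \<gamma> \<mu>"
proof -
  have "0 < 4 * \<alpha> * \<mu> * \<beta>" using assms by simp
  then have "\<bar>\<beta> - \<gamma> - \<mu>\<bar> < sqrt ((\<beta> - \<gamma> - \<mu>)^2 + 4 * \<alpha> * \<mu> * \<beta>)"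
    by (intro real_less_rsqrt) simp
  then show ?thesis
    using assms unfolding x_star_def by (simp add: abs_less_iff)
qed

lemma x_star_root:
  assumes "0 < \<beta>" "0 \<le> \<alpha> * \<mu>"
  shows "\<beta> * (x_star \<alpha> \<beta> \<gamma> \<mu>)^2 + (\<gamma> + \<mu> - \<beta>) * x_star \<alpha> \<beta> \<gamma> \<mu> = \<alpha> * \<mu>"
proof -
  define s where "s = sqrt ((\<beta> - \<gamma> - \<mu>)^2 + 4 * \<alpha> * \<mu> * \<beta>)"
  have "0 \<le> 4 * \<alpha> * \<mu> * \<beta>" using assms by simp
  then have s2: "s^2 = (\<beta> - \<gamma> - \<mu>)^2 + 4 * \<alpha> * \<mu> * \<beta>"
    unfolding s_def by (intro real_sqrt_pow2) simp
  have "\<beta> * (x_star \<alpha> \<beta> \<gamma> \<mu>)^2 + (\<gamma> + \<mu> - \<beta>) * x_star \<alpha> \<beta> \<gamma> \<mu> - \<alpha> * \<mu>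
      = (s^2 - ((\<beta> - \<gamma> - \<mu>)^2 + 4 * \<alpha> * \<mu> * \<beta>)) / (4 * \<beta>)"
    using assms unfolding x_star_def s_def[symmetric]
    by (simp add: field_simps power2_eq_square)
  then show ?thesis using s2 by simp
qed

lemma sgn_x_star_quadratic:
  assumes "0 < \<beta>" "0 < \<alpha> * \<mu>" "0 \<le> t"
  shows "sgn (\<beta> * t^2 + (\<gamma> + \<mu> - \<beta>) * t - \<alpha> * \<mu>) = sgn (t - x_star \<alpha> \<beta> \<gamma> \<mu>)"
proof -
  define x where "x = x_star \<alpha> \<beta> \<gamma> \<mu>"
  have root: "\<beta> * x^2 + (\<gamma> + \<mu> - \<beta>) * x = \<alpha> * \<mu>"
    unfolding x_def using x_star_root assms by simp
  have "0 < x" unfolding x_def using x_star_pos[OF assms(1,2)] .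
  moreover have "0 < x * (\<beta> * x + \<gamma> + \<mu> - \<beta>)"
    using root assms(2) by (simp add: algebra_simps power2_eq_square)
  ultimately have "0 < \<beta> * x + \<gamma> + \<mu> - \<beta>"
    by (simp add: zero_less_mult_iff)
  moreover have "0 \<le> \<beta> * t" using assms by simp
  ultimately have K: "0 < \<beta> * (t + x) + \<gamma> + \<mu> - \<beta>"
    by (simp add: distrib_left)
  have "\<beta> * t^2 + (\<gamma> + \<mu> - \<beta>) * t - \<alpha> * \<mu> = (t - x) * (\<beta> * (t + x) + \<gamma> + \<mu> - \<beta>)"
    using root by (simp add: algebra_simps power2_eq_square)
  then show ?thesis
    unfolding x_def[symmetric] using K by (simp add: sgn_mult sgn_pos)
qed

lemma two_class_equilibrium_total_pos:
  fixes \<alpha> \<beta> \<gamma> \<pi>1 \<mu>1 x1 x2 :: real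
  assumes "0 \<le> x1" "0 \<le> x2" "0 < \<alpha> * \<pi>1 * \<mu>1"
    and "\<alpha> * \<pi>1 * \<mu>1 + \<beta> * (x1 + x2) * (\<pi>1 - x1) - (\<gamma> + \<mu>1) * x1 = 0"
  shows "0 < x1 + x2"
proof (rule ccontr)
  assume "\<not> 0 < x1 + x2"
  then have "x1 = 0" "x2 = 0" using assms(1,2) by linarith+
  then have "\<alpha> * \<pi>1 * \<mu>1 = 0" using assms(4) by simp
  then show False using assms(3) by linarith
qed

lemma two_class_equilibrium_balance:
  fixes \<alpha> \<beta> \<gamma> \<mu>1 \<mu>2 \<pi>1 \<pi>2 x1 x2 :: real
  defines "w \<equiv> x1 + x2"
  assumes "\<pi>1 + \<pi>2 = 1" "\<beta> * w + \<gamma> + \<mu>1 \<noteq> 0" "\<beta> * w + \<gamma> + \<mu>2 \<noteq> 0"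
    and eq1: "\<alpha> * \<pi>1 * \<mu>1 + \<beta> * (x1 + x2) * (\<pi>1 - x1) - (\<gamma> + \<mu>1) * x1 = 0"
    and eq2: "\<alpha> * \<pi>2 * \<mu>2 + \<beta> * (x1 + x2) * (\<pi>2 - x2) - (\<gamma> + \<mu>2) * x2 = 0"
  shows "\<alpha> - w = (\<alpha> * \<gamma> - \<beta> * (1 - \<alpha>) * w)
                  * (\<pi>1 / (\<beta> * w + \<gamma> + \<mu>1) + \<pi>2 / (\<beta> * w + \<gamma> + \<mu>2))"
proof -
  define \<phi> where "\<phi> = \<alpha> * \<gamma> - \<beta> * (1 - \<alpha>) * w"
  have xi: "x1 = \<pi>1 * (\<alpha> - \<phi> / (\<beta> * w + \<gamma> + \<mu>1))" "x2 = \<pi>2 * (\<alpha> - \<phi> / (\<beta> * w + \<gamma> + \<mu>2))"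
    using eq1 eq2 assms(3,4) unfolding \<phi>_def w_def by (simp_all add: field_simps)
  have "\<alpha> - w = \<alpha> * (\<pi>1 + \<pi>2) - (x1 + x2)" using assms(2) w_def by simp
  also have "\<dots> = \<phi> * (\<pi>1 / (\<beta> * w + \<gamma> + \<mu>1) + \<pi>2 / (\<beta> * w + \<gamma> + \<mu>2))"
    by (simp only: xi) (simp add: algebra_simps)
  finally show ?thesis unfolding \<phi>_def .
qed

lemma sgn_two_class_total_minus_x_star:
  fixes \<alpha> \<beta> \<gamma> \<mu> \<mu>1 \<mu>2 \<pi>1 \<pi>2 x1 x2 :: real
  assumes \<alpha>: "0 < \<alpha>" and \<beta>: "0 < \<beta>" and \<gamma>: "0 < \<gamma>"
    and \<mu>i: "0 < \<mu>1" "0 < \<mu>2" "\<mu>1 \<noteq> \<mu>2"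
    and \<pi>i: "0 < \<pi>1" "0 < \<pi>2" "\<pi>1 + \<pi>2 = 1"
    and \<mu>: "\<mu> = \<pi>1 * \<mu>1 + \<pi>2 * \<mu>2"
    and x: "0 \<le> x1" "0 \<le> x2"
    and eq1: "\<alpha> * \<pi>1 * \<mu>1 + \<beta> * (x1 + x2) * (\<pi>1 - x1) - (\<gamma> + \<mu>1) * x1 = 0"
    and eq2: "\<alpha> * \<pi>2 * \<mu>2 + \<beta> * (x1 + x2) * (\<pi>2 - x2) - (\<gamma> + \<mu>2) * x2 = 0"
  shows "sgn (x1 + x2 - x_star \<alpha> \<beta> \<gamma> \<mu>) = sgn (\<beta> * (1 - \<alpha>) - \<gamma>)"
proof -
  define w where "w = x1 + x2"
  define D1 D2 D
    where "D1 = \<beta> * w + \<gamma> + \<mu>1" and "D2 = \<beta> * w + \<gamma> + \<mu>2" and "D = \<beta> * w + \<gamma> + \<mu>"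
  define \<phi> where "\<phi> = \<alpha> * \<gamma> - \<beta> * (1 - \<alpha>) * w"
  define S where "S = \<pi>1 / D1 + \<pi>2 / D2"
  have w: "0 < w"
    unfolding w_def using two_class_equilibrium_total_pos[OF x _ eq1] \<alpha> \<pi>i \<mu>i by simp
  have D_gt: "\<gamma> < D1" "\<gamma> < D2"
    unfolding D1_def D2_def using \<beta> w \<mu>i by (simp_all add: add_pos_pos)
  have "\<pi>1 * D1 + \<pi>2 * D2 = (\<pi>1 + \<pi>2) * (\<beta> * w + \<gamma>) + \<mu>"
    unfolding D1_def D2_def \<mu> by (simp add: algebra_simps)
  then have D: "D = \<pi>1 * D1 + \<pi>2 * D2"
    unfolding D_def using \<pi>i(3) by simp
  have balance: "\<alpha> - w = \<phi> * S"
    using two_class_equilibrium_balance[OF \<pi>i(3) _ _ eq1 eq2] D_gt \<gamma>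
    unfolding \<phi>_def S_def D1_def D2_def w_def by simp
  have "\<phi> * (1 - \<gamma> * S) = \<phi> - \<gamma> * (\<alpha> - w)"
    by (simp add: balance algebra_simps)
  also have "\<dots> = (\<gamma> - \<beta> * (1 - \<alpha>)) * w"
    unfolding \<phi>_def by (simp add: algebra_simps)
  finally have \<phi>_eq: "\<phi> * (1 - \<gamma> * S) = (\<gamma> - \<beta> * (1 - \<alpha>)) * w" .
  have "0 < 1 - \<gamma> * S"
    using weighted_inverse_mean_less[OF \<pi>i \<gamma> D_gt] \<gamma> unfolding S_def by (simp add: field_simps)
  from sgn_eq_if_mult_pos_eq[OF \<phi>_eq this w]
  have sgn_\<phi>: "sgn \<phi> = sgn (\<gamma> - \<beta> * (1 - \<alpha>))" .
  have SD: "1 < S * D"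
    unfolding D S_def using \<pi>i D_gt \<gamma> \<mu>i(3) unfolding D1_def D2_def
    by (simp add: weighted_mean_times_weighted_inverse_mean_gt_1)
  have "\<beta> * w^2 + (\<gamma> + \<mu> - \<beta>) * w - \<alpha> * \<mu> = (w - \<alpha>) * D + \<phi>"
    unfolding D_def \<phi>_def by (simp add: algebra_simps power2_eq_square)
  also have "\<dots> = \<phi> * (1 - S * D)"
    using balance by (simp add: algebra_simps)
  finally have P_w: "\<beta> * w^2 + (\<gamma> + \<mu> - \<beta>) * w - \<alpha> * \<mu> = \<phi> * (1 - S * D)" .
  have \<alpha>\<mu>: "0 < \<alpha> * \<mu>" using \<alpha> \<pi>i \<mu>i unfolding \<mu> by (simp add: add_pos_pos)
  have "sgn (w - x_star \<alpha> \<beta> \<gamma> \<mu>) = sgn (\<phi> * (1 - S * D))"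
    using sgn_x_star_quadratic[where \<gamma> = \<gamma>, OF \<beta> \<alpha>\<mu> less_imp_le[OF w]] P_w by simp
  also have "\<dots> = sgn \<phi> * sgn (1 - S * D)"
    by (rule sgn_mult)
  also have "\<dots> = sgn (\<beta> * (1 - \<alpha>) - \<gamma>)"
    using SD sgn_\<phi> by (simp add: sgn_neg flip: sgn_minus)
  finally show ?thesis unfolding w_def .
qed

lemma order_iff_threshold_if_sgn_eq:
  fixes x w \<alpha> \<beta> \<gamma> :: real
  assumes "sgn (w - x) = sgn (\<beta> * (1 - \<alpha>) - \<gamma>)" "0 < \<beta>"
  shows "(x < w \<longleftrightarrow> \<alpha> < 1 - \<gamma> / \<beta>) \<and> (x > w \<longleftrightarrow> \<alpha> > 1 - \<gamma> / \<beta>)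
         \<and> (x = w \<longleftrightarrow> \<alpha> = 1 - \<gamma> / \<beta>)"
proof -
  have "\<alpha> < 1 - \<gamma> / \<beta> \<longleftrightarrow> 0 < \<beta> * (1 - \<alpha>) - \<gamma>"
    and "\<alpha> > 1 - \<gamma> / \<beta> \<longleftrightarrow> \<beta> * (1 - \<alpha>) - \<gamma> < 0"
    and "\<alpha> = 1 - \<gamma> / \<beta> \<longleftrightarrow> \<beta> * (1 - \<alpha>) - \<gamma> = 0"
    using assms(2) by (auto simp: field_simps)
  moreover have "x < w \<longleftrightarrow> 0 < w - x" "x > w \<longleftrightarrow> w - x < 0" "x = w \<longleftrightarrow> w - x = 0"
    by auto
  ultimately show ?thesis using assms(1) by (simp add: sgn_real_def split: if_splits)
qed

lemma integral_cond_measure: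
  fixes q :: "real measure" and f :: "real \<Rightarrow> real"
  assumes "C \<in> sets q" "f \<in> borel_measurable q"
  shows "(\<integral>r. f r \<partial>cond_measure q C) = (\<integral>r. indicator C r * f r \<partial>q) / measure q C"
proof -
  have "(\<integral>r. f r \<partial>cond_measure q C) = (\<integral>r. indicator C r / measure q C * f r \<partial>q)"
    unfolding cond_measure_def using assms by (subst integral_density) auto
  also have "\<dots> = (\<integral>r. indicator C r * f r \<partial>q) / measure q C"
    by (simp flip: integral_divide_zero)
  finally show ?thesis .
qed

lemma integral_cond_measure_mixture:
  fixes q :: "real measure" and f :: "real \<Rightarrow> real"
  assumes C: "C1 \<in> sets q" "C2 \<in> sets q" "C1 \<inter> C2 = {}" "AE r in q. r \<in> C1 \<union> C2"
    and pos: "measure q C1 \<noteq> 0" "measure q C2 \<noteq> 0"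
    and f: "integrable q f"
  shows "integral\<^sup>L q f = measure q C1 * integral\<^sup>L (cond_measure q C1) f
                         + measure q C2 * integral\<^sup>L (cond_measure q C2) f"
proof -
  have f_Ci: "integrable q (\<lambda>r. indicator C1 r * f r)" "integrable q (\<lambda>r. indicator C2 r * f r)"
    using integrable_mult_indicator[OF C(1) f] integrable_mult_indicator[OF C(2) f] by simp_all
  have "integral\<^sup>L q f = (\<integral>r. indicator C1 r * f r + indicator C2 r * f r \<partial>q)"
    using C(3,4) f f_Ci
    by (intro integral_cong_AE) (auto elim: eventually_mono split: split_indicator)
  also have "\<dots> = (\<integral>r. indicator C1 r * f r \<partial>q) + (\<integral>r. indicator C2 r * f r \<partial>q)"
    using f_Ci by (rule Bochner_Integration.integral_add)
  finally show ?thesis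
    using C(1,2) f pos by (simp add: integral_cond_measure)
qed

lemma integral_cond_measure_less:
  fixes q :: "real measure" and f :: "real \<Rightarrow> real"
  assumes q: "finite_measure q"
    and C: "C1 \<in> sets q" "C2 \<in> sets q" "0 < measure q C1" "0 < measure q C2"
    and f: "integrable q f"
    and below: "\<And>r. r \<in> C1 \<Longrightarrow> f r \<le> k" and above: "\<And>r. r \<in> C2 \<Longrightarrow> k < f r"
  shows "integral\<^sup>L (cond_measure q C1) f < integral\<^sup>L (cond_measure q C2) f"
proof -
  interpret finite_measure q by (fact q)
  have const: "(\<integral>r. indicator C r * k \<partial>q) = k * measure q C" if "C \<in> sets q" for C
    using that by simp
  have "(\<integral>r. indicator C1 r * f r \<partial>q) \<le> (\<integral>r. indicator C1 r * k \<partial>q)"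
    using integrable_mult_indicator[OF C(1) f] integrable_mult_indicator[OF C(1) integrable_const[of k]]
      below
    by (intro integral_mono) (auto split: split_indicator)
  then have "integral\<^sup>L (cond_measure q C1) f \<le> k"
    using C f const by (simp add: integral_cond_measure divide_le_eq mult.commute)
  moreover have "(\<integral>r. indicator C2 r * k \<partial>q) < (\<integral>r. indicator C2 r * f r \<partial>q)"
    using integrable_mult_indicator[OF C(2) f] integrable_mult_indicator[OF C(2) integrable_const[of k]]
      C(2,4) above
    by (intro integral_less_AE[where A = C2])
       (auto simp: emeasure_eq_measure less_imp_le split: split_indicator)
  then have "k < integral\<^sup>L (cond_measure q C2) f"
    using C f const by (simp add: integral_cond_measure less_divide_eq mult.commute)
  ultimately show ?thesis by linarith
qed

lemma inverse_mu_in_mixture: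
  assumes "p1 + p2 = 1"
    and "laplace \<nu> d = p1 * laplace \<nu>1 d + p2 * laplace \<nu>2 d"
    and "mean \<nu> = p1 * mean \<nu>1 + p2 * mean \<nu>2"
  shows "1 / mu_in \<nu> d = p1 / mu_in \<nu>1 d + p2 / mu_in \<nu>2 d"
proof (cases "0 < d")
  case True
  have "p2 = 1 - p1" using assms(1) by simp
  then have "1 - laplace \<nu> d = p1 * (1 - laplace \<nu>1 d) + p2 * (1 - laplace \<nu>2 d)"
    using assms(2) by (simp add: algebra_simps)
  then show ?thesis using True by (simp add: mu_in_def add_divide_distrib)
next
  case False
  then show ?thesis using assms(3) by (simp add: mu_in_def)
qed

(* No side conditions: wherever a denominator vanishes, both sides are 0. *)
lemma pi_class_eq_mu_in:
  "pi_class q C d = measure q C * mu_in q d / mu_in (cond_measure q C) d"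
  by (simp add: pi_class_def mu_in_def Let_def)

lemma mu_in_less:
  assumes "0 \<le> d" "0 < mu_in \<nu>1 d" "0 < mu_in \<nu>2 d"
    and "0 < d \<Longrightarrow> laplace \<nu>1 d < laplace \<nu>2 d" and "mean \<nu>2 < mean \<nu>1"
  shows "mu_in \<nu>1 d < mu_in \<nu>2 d"
  using assms by (cases "0 < d") (auto simp: mu_in_def zero_less_divide_iff intro!: divide_strict_left_mono)

lemma sentence_classes_mu_in:
  fixes q :: "real measure" and d r :: real
  assumes prob: "prob_space q" and sets_q: "sets q = sets borel" and supp: "measure q {..0} = 0"
    and fin_mean: "integrable q (\<lambda>s. s)" and d: "0 \<le> d" and r: "0 < r"
    and p1: "0 < measure q {0<..r}" and p2: "0 < measure q {r<..}"
    and \<mu>1: "0 < mu_in (cond_measure q {0<..r}) d" and \<mu>2: "0 < mu_in (cond_measure q {r<..}) d"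
  shows "measure q {0<..r} + measure q {r<..} = 1"
    and "1 / mu_in q d = measure q {0<..r} / mu_in (cond_measure q {0<..r}) d
                       + measure q {r<..} / mu_in (cond_measure q {r<..}) d"
    and "mu_in (cond_measure q {r<..}) d < mu_in (cond_measure q {0<..r}) d"
proof -
  interpret prob_space q by (fact prob)
  have sets: "{0<..r} \<in> sets q" "{r<..} \<in> sets q" "{..0} \<in> sets q"
    using sets_q by auto
  have disj: "{0<..r} \<inter> {r<..} = {}" by auto
  have "AE s in q. s \<notin> {..0}" using prob_eq_0[OF sets(3)] supp by simp
  then have cover: "AE s in q. s \<in> {0<..r} \<union> {r<..}"
    by (auto elim: eventually_mono)
  have "prob ({0<..r} \<union> {r<..}) = 1"
    using prob_eq_1 sets cover by blast
  then show p_sum: "measure q {0<..r} + measure q {r<..} = 1"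
    using finite_measure_Union[OF sets(1,2) disj] by simp
  have "AE s in q. norm (exp (- d * s)) \<le> 1"
    using \<open>AE s in q. s \<notin> {..0}\<close> d by (auto elim!: eventually_mono)
  moreover have "(\<lambda>s. exp (- d * s)) \<in> borel_measurable q"
    unfolding measurable_cong_sets[OF sets_q refl] by simp
  ultimately have laplace_int: "integrable q (\<lambda>s. exp (- d * s))"
    by (rule integrable_const_bound)
  note mixture = integral_cond_measure_mixture[OF sets(1,2) disj cover
      p1[THEN less_imp_neq, symmetric] p2[THEN less_imp_neq, symmetric]]
  show "1 / mu_in q d = measure q {0<..r} / mu_in (cond_measure q {0<..r}) d
                     + measure q {r<..} / mu_in (cond_measure q {r<..}) d"
    using p_sum mixture[OF laplace_int] mixture[OF fin_mean]
    by (intro inverse_mu_in_mixture) (simp_all add: laplace_def mean_def)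
  note separate = integral_cond_measure_less[OF finite_measure_axioms sets(1,2) p1 p2]
  have "laplace (cond_measure q {r<..}) d < laplace (cond_measure q {0<..r}) d" if "0 < d"
    using separate[OF integrable_minus[OF laplace_int], of "- exp (- d * r)"] that
    by (simp add: laplace_def)
  moreover have "mean (cond_measure q {0<..r}) < mean (cond_measure q {r<..})"
    using separate[OF fin_mean, of r] by (simp add: mean_def)
  ultimately show "mu_in (cond_measure q {r<..}) d < mu_in (cond_measure q {0<..r}) d"
    using d \<mu>1 \<mu>2 by (intro mu_in_less)
qed

theorem proposition3p1:
  fixes q :: "real measure" and \<beta> \<gamma> \<alpha>I d rstar x1 x2 :: real
  assumes prob: "prob_space q"
    and sets_q: "sets q = sets borel"
    and supp: "measure q {..0} = 0"
    and decomp: "\<exists>(f :: real \<Rightarrow> ennreal) (A :: real set) (w :: real \<Rightarrow> ennreal).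
        f \<in> borel_measurable borel \<and> finite A \<and>
        (\<forall>S \<in> sets borel. emeasure q S = (\<integral>\<^sup>+ r\<in>S. f r \<partial>lborel) + (\<Sum>a\<in>A \<inter> S. w a))"
    and fin_mean: "integrable q (\<lambda>r. r)"
    and \<beta>_pos: "\<beta> > 0" and \<gamma>_pos: "\<gamma> > 0"
    and \<alpha>I: "0 < \<alpha>I" "\<alpha>I \<le> 1"
    and d_nonneg: "d \<ge> 0"
    and rstar: "rstar > 0"
    and p1: "measure q {0<..rstar} > 0"
    and p2: "measure q {rstar<..} > 0"
    and mu1: "mu_in (cond_measure q {0<..rstar}) d > 0"
    and mu2: "mu_in (cond_measure q {rstar<..}) d > 0"
    and x1_nonneg: "x1 \<ge> 0" and x2_nonneg: "x2 \<ge> 0"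
    and eq1: "\<alpha>I * pi_class q {0<..rstar} d * mu_in (cond_measure q {0<..rstar}) d
              + \<beta> * (x1 + x2) * (pi_class q {0<..rstar} d - x1)
              - (\<gamma> + mu_in (cond_measure q {0<..rstar}) d) * x1 = 0"
    and eq2: "\<alpha>I * pi_class q {rstar<..} d * mu_in (cond_measure q {rstar<..}) d
              + \<beta> * (x1 + x2) * (pi_class q {rstar<..} d - x2)
              - (\<gamma> + mu_in (cond_measure q {rstar<..}) d) * x2 = 0"
  shows "x_star \<alpha>I \<beta> \<gamma> (mu_in q d) > 0 \<and> x1 + x2 > 0 \<and>
         (x_star \<alpha>I \<beta> \<gamma> (mu_in q d) < x1 + x2 \<longleftrightarrow> \<alpha>I < 1 - \<gamma> / \<beta>) \<and>
         (x_star \<alpha>I \<beta> \<gamma> (mu_in q d) > x1 + x2 \<longleftrightarrow> \<alpha>I > 1 - \<gamma> / \<beta>) \<and>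
         (x_star \<alpha>I \<beta> \<gamma> (mu_in q d) = x1 + x2 \<longleftrightarrow> \<alpha>I = 1 - \<gamma> / \<beta>)"
proof -
  define p1 p2 where "p1 = measure q {0<..rstar}" and "p2 = measure q {rstar<..}"
  define \<mu> \<mu>1 \<mu>2 where "\<mu> = mu_in q d"
    and "\<mu>1 = mu_in (cond_measure q {0<..rstar}) d" and "\<mu>2 = mu_in (cond_measure q {rstar<..}) d"
  note classes = sentence_classes_mu_in[OF prob sets_q supp fin_mean d_nonneg rstar p1 p2 mu1 mu2,
      folded p1_def p2_def \<mu>_def \<mu>1_def \<mu>2_def]
  have pi: "0 < p1" "0 < p2" using p1 p2 by (simp_all add: p1_def p2_def)
  have \<mu>i: "0 < \<mu>1" "0 < \<mu>2" "\<mu>1 \<noteq> \<mu>2"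
    using mu1 mu2 classes(3) by (simp_all add: \<mu>1_def \<mu>2_def)
  note weights = harmonic_mixture_weights[OF pi classes(1) \<mu>i(1,2) classes(2)]
  have \<pi>_pos: "0 < p1 * \<mu> / \<mu>1" "0 < p2 * \<mu> / \<mu>2" using pi weights(1) \<mu>i by simp_all
  have \<pi>: "pi_class q {0<..rstar} d = p1 * \<mu> / \<mu>1" "pi_class q {rstar<..} d = p2 * \<mu> / \<mu>2"
    by (simp_all add: pi_class_eq_mu_in p1_def p2_def \<mu>_def \<mu>1_def \<mu>2_def)
  note eqs = eq1[unfolded \<pi>, folded \<mu>1_def] eq2[unfolded \<pi>, folded \<mu>2_def]
  have "sgn (x1 + x2 - x_star \<alpha>I \<beta> \<gamma> \<mu>) = sgn (\<beta> * (1 - \<alpha>I) - \<gamma>)"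
    by (rule sgn_two_class_total_minus_x_star[OF \<alpha>I(1) \<beta>_pos \<gamma>_pos \<mu>i \<pi>_pos weights(2,3)
          x1_nonneg x2_nonneg eqs])
  moreover have "0 < x_star \<alpha>I \<beta> \<gamma> \<mu>" using \<beta>_pos \<alpha>I weights(1) by (simp add: x_star_pos)
  moreover have "0 < x1 + x2"
    using two_class_equilibrium_total_pos[OF x1_nonneg x2_nonneg _ eqs(1)]
      \<alpha>I(1) pi(1) weights(1) \<mu>i(1) by simp
  ultimately show ?thesis
    unfolding \<mu>_def[symmetric] using order_iff_threshold_if_sgn_eq \<beta>_pos by blast
qed

end
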